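(* For every policy $\pi$, every bounded measurable heuristic $h:\mathcal S\to\mathbb R$ and every mixing coefficient $\lambda\in[0,1]$, $$V^*(d_0)-V^\pi(d_0)=\mathrm{Regret}(h,\lambda,\pi)+\mathrm{Bias}(h,\lambda,\pi),$$ where $$\mathrm{Regret}(h,\lambda,\pi):=\lambda\big(\widetilde V^*(d_0)-\widetilde V^\pi(d_0)\big)+\frac{1-\lambda}{1-\gamma}\big(\widetilde V^*(d^\pi)-\widetilde V^\pi(d^\pi)\big),$$ $$\mathrm{Bias}(h,\lambda,\pi):=\big(V^*(d_0)-\widetilde V^*(d_0)\big)+\frac{\gamma(1-\lambda)}{1-\gamma}\,\mathbb E_{(s,a)\sim d^\pi}\,\mathbb E_{s'\sim P(\cdot|s,a)}\big[h(s')-\widetilde V^*(s')\big].$$ (Here $\widetilde V^\pi,\widetilde V^*$ are computed in the reshaped MDP built from $h$ and $\lambda$.) Moreover, for every constant $b\in\mathbb R$, $\mathrm{Bias}(h+b,\lambda,\pi)=\mathrm{Bias}(h,\lambda,\pi)$ and $\mathrm{Regret}(h+b,\lambda,\pi)=\mathrm{Regret}(h,\lambda,\pi)$, where the left-hand sides use the reshaped MDP built from the heuristic $h+b$.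
   Context: Let $\mathcal M=(\mathcal S,\mathcal A,P,r,\gamma)$ be a discounted MDP with transition kernel $P(\cdot|s,a)$, reward $r:\mathcal S\times\mathcal A\to[0,1]$ and discount $\gamma\in[0,1)$. A policy $\pi$ is a Markov kernel from $\mathcal S$ to distributions on $\mathcal A$. For a state $s$ (resp. a distribution $d_0$ on $\mathcal S$), $\rho^\pi(s)$ (resp. $\rho^\pi(d_0)$) denotes the law of the trajectory $s_0,a_0,s_1,a_1,\dots$ with $s_0=s$ (resp. $s_0\sim d_0$), $a_t\sim\pi(\cdot|s_t)$, $s_{t+1}\sim P(\cdot|s_t,a_t)$. $V^\pi(s)=\mathbb E_{\rho^\pi(s)}[\sum_{t\ge0}\gamma^t r(s_t,a_t)]$, and $V^*=V^{\pi^*}=\sup_\pi V^\pi$ for an optimal policy $\pi^*$ (assumed to exist). For $V:\mathcal S\to\mathbb R$ and a distribution $d$ on $\mathcal S$, $V(d)=\mathbb E_{s\sim d}[V(s)]$. A fixed initial distribution $d_0$ is given; $d_t^\pi$ is the law of $s_t$ under $\rho^\pi(d_0)$, $d^\pi=(1-\gamma)\sum_{t\ge0}\gamma^t d_t^\pi$, and $d^\pi(s,a)=d^\pi(s)\pi(a|s)$. Given a bounded heuristic $h:\mathcal S\to\mathbb R$ and $\lambda\in[0,1]$, the reshaped MDP is $\widetilde{\mathcal M}=(\mathcal S,\mathcal A,P,\widetilde r,\widetilde\gamma)$ with $\widetilde r(s,a)=r(s,a)+(1-\lambda)\gamma\,\mathbb E_{s'\sim P(\cdot|s,a)}[h(s')]$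 and $\widetilde\gamma=\lambda\gamma$. $\widetilde V^\pi(s)=\mathbb E_{\rho^\pi(s)}[\sum_{t\ge0}(\lambda\gamma)^t\widetilde r(s_t,a_t)]$ is the value of $\pi$ in $\widetilde{\mathcal M}$, and $\widetilde V^*=\sup_\pi\widetilde V^\pi$, attained by an optimal policy $\widetilde\pi^*$ of $\widetilde{\mathcal M}$ (assumed to exist). *)

theory Defs
  imports "HOL-Probability.Probability"
begin

definition policies :: "'s measure \<Rightarrow> 'a measure \<Rightarrow> ('s \<Rightarrow> 'a measure) set" where
  "policies S A = S \<rightarrow>\<^sub>M prob_algebra A"

definition step_dist :: "('s \<times> 'a \<Rightarrow> 's measure) \<Rightarrow> ('s \<Rightarrow> 'a measure) \<Rightarrow> 's measure \<Rightarrow> 's measure" where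
  "step_dist P p mu = bind mu (\<lambda>s. bind (p s) (\<lambda>a. P (s, a)))"

definition state_dist :: "('s \<times> 'a \<Rightarrow> 's measure) \<Rightarrow> ('s \<Rightarrow> 'a measure) \<Rightarrow> 's measure \<Rightarrow> nat \<Rightarrow> 's measure" where
  "state_dist P p mu t = (step_dist P p ^^ t) mu"

definition pol_avg :: "('s \<Rightarrow> 'a measure) \<Rightarrow> ('s \<times> 'a \<Rightarrow> real) \<Rightarrow> 's \<Rightarrow> real" where
  "pol_avg p f s = (\<integral>a. f (s, a) \<partial>(p s))"

text \<open>V^p(s) = E_{rho^p(s)} sum_t g^t r(s_t,a_t) = sum_t g^t E[r(s_t,a_t)].\<close>
definition pol_value :: "'s measure \<Rightarrow> real \<Rightarrow> ('s \<times> 'a \<Rightarrow> real) \<Rightarrow> ('s \<times> 'a \<Rightarrow> 's measure)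
    \<Rightarrow> ('s \<Rightarrow> 'a measure) \<Rightarrow> 's \<Rightarrow> real" where
  "pol_value S g r P p s = (\<Sum>t. g ^ t * (\<integral>x. pol_avg p r x \<partial>(state_dist P p (return S s) t)))"

definition opt_value :: "'s measure \<Rightarrow> 'a measure \<Rightarrow> real \<Rightarrow> ('s \<times> 'a \<Rightarrow> real)
    \<Rightarrow> ('s \<times> 'a \<Rightarrow> 's measure) \<Rightarrow> 's \<Rightarrow> real" where
  "opt_value S A g r P s = (SUP p \<in> policies S A. pol_value S g r P p s)"

definition at_dist :: "('s \<Rightarrow> real) \<Rightarrow> 's measure \<Rightarrow> real" where
  "at_dist V d = (\<integral>s. V s \<partial>d)"

text \<open>Expectation under the discounted occupancy d^p = (1-g) sum_t g^t d_t^p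
  (d_t^p the law of s_t under rho^p(d0)).\<close>
definition occ_expect :: "real \<Rightarrow> ('s \<times> 'a \<Rightarrow> 's measure) \<Rightarrow> ('s \<Rightarrow> 'a measure) \<Rightarrow> 's measure
    \<Rightarrow> ('s \<Rightarrow> real) \<Rightarrow> real" where
  "occ_expect g P p d0 f = (1 - g) * (\<Sum>t. g ^ t * (\<integral>s. f s \<partial>(state_dist P p d0 t)))"

text \<open>Reshaped reward r~(s,a) = r(s,a) + (1-lam) g E_{s'~P(.|s,a)} h(s'); discount lam*g.\<close>
definition reshaped_reward :: "real \<Rightarrow> real \<Rightarrow> ('s \<times> 'a \<Rightarrow> real) \<Rightarrow> ('s \<times> 'a \<Rightarrow> 's measure)
    \<Rightarrow> ('s \<Rightarrow> real) \<Rightarrow> 's \<times> 'a \<Rightarrow> real" where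
  "reshaped_reward g lam r P h sa = r sa + (1 - lam) * g * (\<integral>s'. h s' \<partial>(P sa))"

definition Regret :: "'s measure \<Rightarrow> 'a measure \<Rightarrow> real \<Rightarrow> ('s \<times> 'a \<Rightarrow> real)
    \<Rightarrow> ('s \<times> 'a \<Rightarrow> 's measure) \<Rightarrow> 's measure \<Rightarrow> ('s \<Rightarrow> real) \<Rightarrow> real \<Rightarrow> ('s \<Rightarrow> 'a measure) \<Rightarrow> real" where
  "Regret S A g r P d0 h lam p =
     (let rt = reshaped_reward g lam r P h;
          Vts = opt_value S A (lam * g) rt P;
          Vtp = pol_value S (lam * g) rt P p
      in lam * (at_dist Vts d0 - at_dist Vtp d0)
         + (1 - lam) / (1 - g) * (occ_expect g P p d0 Vts - occ_expect g P p d0 Vtp))"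

definition Bias :: "'s measure \<Rightarrow> 'a measure \<Rightarrow> real \<Rightarrow> ('s \<times> 'a \<Rightarrow> real)
    \<Rightarrow> ('s \<times> 'a \<Rightarrow> 's measure) \<Rightarrow> 's measure \<Rightarrow> ('s \<Rightarrow> real) \<Rightarrow> real \<Rightarrow> ('s \<Rightarrow> 'a measure) \<Rightarrow> real" where
  "Bias S A g r P d0 h lam p =
     (let rt = reshaped_reward g lam r P h;
          Vts = opt_value S A (lam * g) rt P
      in (at_dist (opt_value S A g r P) d0 - at_dist Vts d0)
         + g * (1 - lam) / (1 - g) *
           occ_expect g P p d0 (pol_avg p (\<lambda>sa. \<integral>s'. h s' - Vts s' \<partial>(P sa))))"

end

theory Submission
  imports Defs
begin

(* Write V~\<^sup>\<pi> and V~\<^sup>* for the value of \<pi> and the optimal value in the reshaped MDP,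
   P\<^sub>\<pi> for the one-step state kernel under \<pi> and E\<^sub>\<pi> for the expectation under the discounted
   occupancy d\<^sup>\<pi>.  Two identities do all the work.  Telescoping: for bounded f,
     E\<^sub>\<pi> f = (1 - \<gamma>) f(d\<^sub>0) + \<gamma> E\<^sub>\<pi> (P\<^sub>\<pi> f).
   Bellman: V~\<^sup>\<pi> = r\<^sub>\<pi> + (1 - \<lambda>) \<gamma> P\<^sub>\<pi> h + \<lambda> \<gamma> P\<^sub>\<pi> V~\<^sup>\<pi>.  Integrating the latter against d\<^sup>\<pi>,
   with E\<^sub>\<pi> r\<^sub>\<pi> = (1 - \<gamma>) V\<^sup>\<pi>(d\<^sub>0) and the telescoping identity for V~\<^sup>\<pi>, expresses V\<^sup>\<pi>(d\<^sub>0)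
   through V~\<^sup>\<pi>(d\<^sub>0), E\<^sub>\<pi> V~\<^sup>\<pi> and E\<^sub>\<pi> (P\<^sub>\<pi> h).  Substituting this and the telescoping identity
   for V~\<^sup>* into Regret + Bias, every occurrence of V~\<^sup>* cancels: the decomposition holds for
   any bounded measurable V~\<^sup>*.
   Replacing h by h + b adds (1 - \<lambda>) \<gamma> b to the reshaped reward, hence c = (1 - \<lambda>) \<gamma> b / (1 - \<lambda> \<gamma>)
   to every reshaped value.  This cancels in the differences making up Regret; in Bias the shift
   of V~\<^sup>*(d\<^sub>0) by c is compensated by the shift b - c of the integrand, weighted by
   \<gamma> (1 - \<lambda>) / (1 - \<gamma>). *)

section \<open>Bounded measurable functions and probability kernels\<close>

definition bounded_measurable :: "'a measure \<Rightarrow> ('a \<Rightarrow> real) set" where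
  "bounded_measurable M = {f \<in> borel_measurable M. \<exists>B. \<forall>x \<in> space M. \<bar>f x\<bar> \<le> B}"

lemma bounded_measurableI:
  assumes "f \<in> borel_measurable M" and "\<And>x. x \<in> space M \<Longrightarrow> \<bar>f x\<bar> \<le> B"
  shows "f \<in> bounded_measurable M"
  using assms unfolding bounded_measurable_def by blast

lemma bounded_measurableE:
  assumes "f \<in> bounded_measurable M"
  obtains B where "\<And>x. x \<in> space M \<Longrightarrow> \<bar>f x\<bar> \<le> B"
  using assms unfolding bounded_measurable_def by blast

lemma bounded_measurable_imp_measurable [measurable_dest]:
  "f \<in> bounded_measurable M \<Longrightarrow> f \<in> borel_measurable M"
  unfolding bounded_measurable_def by blast

lemma bounded_measurable_const: "(\<lambda>x. c) \<in> bounded_measurable M"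
  by (rule bounded_measurableI[where B="\<bar>c\<bar>"]) auto

lemma bounded_measurable_add:
  assumes "f \<in> bounded_measurable M" and "g \<in> bounded_measurable M"
  shows "(\<lambda>x. f x + g x) \<in> bounded_measurable M"
proof -
  obtain B where "\<And>x. x \<in> space M \<Longrightarrow> \<bar>f x\<bar> \<le> B"
    using assms(1) bounded_measurableE by blast
  moreover obtain B' where "\<And>x. x \<in> space M \<Longrightarrow> \<bar>g x\<bar> \<le> B'"
    using assms(2) bounded_measurableE by blast
  ultimately have "\<bar>f x + g x\<bar> \<le> B + B'" if "x \<in> space M" for x
    using that abs_triangle_ineq[of "f x" "g x"] by (smt (verit))
  with assms show ?thesis
    by (intro bounded_measurableI[where B="B + B'"]) auto
qed

lemma bounded_measurable_cmult:
  assumes "f \<in> bounded_measurable M"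
  shows "(\<lambda>x. c * f x) \<in> bounded_measurable M"
proof -
  obtain B where "\<And>x. x \<in> space M \<Longrightarrow> \<bar>f x\<bar> \<le> B"
    using assms bounded_measurableE by blast
  then show ?thesis
    by (intro bounded_measurableI[where B="\<bar>c\<bar> * B"]) (use assms in \<open>auto simp: abs_mult intro: mult_left_mono\<close>)
qed

lemma bounded_measurable_diff:
  assumes "f \<in> bounded_measurable M" and "g \<in> bounded_measurable M"
  shows "(\<lambda>x. f x - g x) \<in> bounded_measurable M"
  using bounded_measurable_add[OF assms(1) bounded_measurable_cmult[OF assms(2), of "-1"]] by simp

lemma bounded_measurable_cong:
  assumes "f \<in> bounded_measurable M" and "\<And>x. x \<in> space M \<Longrightarrow> f x = g x"
  shows "g \<in> bounded_measurable M"
proof -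
  obtain B where "\<And>x. x \<in> space M \<Longrightarrow> \<bar>f x\<bar> \<le> B"
    using assms(1) bounded_measurableE by blast
  moreover have "g \<in> borel_measurable M"
    using bounded_measurable_imp_measurable[OF assms(1)] measurable_cong[of M f g] assms(2) by simp
  ultimately show ?thesis
    using assms(2) by (intro bounded_measurableI[where B=B]) auto
qed

lemma bounded_measurable_Pair2:
  assumes f: "f \<in> bounded_measurable (M \<Otimes>\<^sub>M N)" and x: "x \<in> space M"
  shows "(\<lambda>y. f (x, y)) \<in> bounded_measurable N"
proof -
  obtain B where "\<And>z. z \<in> space (M \<Otimes>\<^sub>M N) \<Longrightarrow> \<bar>f z\<bar> \<le> B"
    using f bounded_measurableE by blast
  with x show ?thesis
    by (intro bounded_measurableI[where B=B] measurable_Pair2[OF bounded_measurable_imp_measurable[OF f]])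
      (auto simp: space_pair_measure)
qed

lemma
  assumes "M \<in> space (prob_algebra X)"
  shows prob_space_in_prob_algebra: "prob_space M"
    and sets_in_prob_algebra: "sets M = sets X"
    and space_in_prob_algebra: "space M = space X"
  using assms by (auto simp: space_prob_algebra intro!: sets_eq_imp_space_eq)

lemma integral_cong_prob_algebra:
  assumes "M \<in> space (prob_algebra X)" and "\<And>x. x \<in> space X \<Longrightarrow> f x = g x"
  shows "(\<integral>x. f x \<partial>M) = (\<integral>x. g x \<partial>M)"
  using assms by (intro Bochner_Integration.integral_cong) (auto simp: space_in_prob_algebra)

lemma integrable_prob_algebra:
  assumes M: "M \<in> space (prob_algebra X)" and f: "f \<in> bounded_measurable X"
  shows "integrable M f"
proof -
  interpret prob_space M by (rule prob_space_in_prob_algebra[OF M])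
  obtain B where "\<And>x. x \<in> space X \<Longrightarrow> \<bar>f x\<bar> \<le> B"
    using f bounded_measurableE by blast
  with f show ?thesis
    by (intro integrable_const_bound[where B=B] AE_I2)
      (auto simp: space_in_prob_algebra[OF M] measurable_cong_sets[OF sets_in_prob_algebra[OF M] refl])
qed

lemma abs_integral_prob_algebra_le:
  fixes f :: "_ \<Rightarrow> real"
  assumes M: "M \<in> space (prob_algebra X)" and f: "f \<in> borel_measurable X"
    and B: "\<And>x. x \<in> space X \<Longrightarrow> \<bar>f x\<bar> \<le> B"
  shows "\<bar>\<integral>x. f x \<partial>M\<bar> \<le> B"
proof -
  interpret prob_space M by (rule prob_space_in_prob_algebra[OF M])
  have "integrable M f"
    using M f B by (intro integrable_prob_algebra bounded_measurableI)
  moreover have "f x \<le> B" and "-B \<le> f x" if "x \<in> space M" for x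
    using B[of x] that by (auto simp: space_in_prob_algebra[OF M])
  then have "AE x in M. f x \<le> B" and "AE x in M. -B \<le> f x"
    by auto
  ultimately show ?thesis
    using integral_le_const[of f B] integral_ge_const[of f "-B"] by (simp add: abs_le_iff)
qed

lemma integral_add_const_prob_algebra:
  assumes M: "M \<in> space (prob_algebra X)" and f: "f \<in> bounded_measurable X"
  shows "(\<integral>x. f x + c \<partial>M) = (\<integral>x. f x \<partial>M) + c"
proof -
  interpret prob_space M by (rule prob_space_in_prob_algebra[OF M])
  show ?thesis using integrable_prob_algebra[OF M f] by (simp add: prob_space)
qed

lemma integral_bind_prob_algebra:
  assumes M: "M \<in> space (prob_algebra Y)" and F: "F \<in> Y \<rightarrow>\<^sub>M prob_algebra X"
    and f: "f \<in> bounded_measurable X"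
  shows "(\<integral>x. f x \<partial>(M \<bind> F)) = (\<integral>y. (\<integral>x. f x \<partial>F y) \<partial>M)"
proof -
  interpret prob_space M by (rule prob_space_in_prob_algebra[OF M])
  obtain B where "\<And>x. x \<in> space X \<Longrightarrow> \<bar>f x\<bar> \<le> B"
    using f bounded_measurableE by blast
  moreover have "f \<in> borel_measurable X" using f by measurable
  moreover have "F \<in> M \<rightarrow>\<^sub>M subprob_algebra X"
    using measurable_prob_algebraD[OF F] by (simp add: measurable_cong_sets[OF sets_in_prob_algebra[OF M] refl])
  moreover have "emeasure (F y) (space (F y)) \<le> ennreal 1" if "y \<in> space M" for y
    using prob_space.emeasure_space_1[OF prob_space_in_prob_algebra[OF measurable_space[OF F]]] that
    by (simp add: space_in_prob_algebra[OF M])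
  then have "AE y in M. emeasure (F y) (space (F y)) \<le> ennreal 1"
    by auto
  ultimately show ?thesis
    by (intro integral_bind finite_measure_axioms)
qed

lemma integral_kernel_bounded_measurable:
  assumes F: "F \<in> Y \<rightarrow>\<^sub>M prob_algebra X" and f: "f \<in> bounded_measurable X"
  shows "(\<lambda>y. \<integral>x. f x \<partial>F y) \<in> bounded_measurable Y"
proof -
  obtain B where "\<And>x. x \<in> space X \<Longrightarrow> \<bar>f x\<bar> \<le> B"
    using f bounded_measurableE by blast
  with bounded_measurable_imp_measurable[OF f] show ?thesis
    by (intro bounded_measurableI[where B=B] measurable_compose[OF measurable_prob_algebraD[OF F]]
        integral_measurable_subprob_algebra abs_integral_prob_algebra_le[OF measurable_space[OF F]])
qed

lemma summable_geometric_weighted: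
  fixes a :: "nat \<Rightarrow> real"
  assumes "\<And>i. \<bar>a i\<bar> \<le> B" and "0 \<le> q" "q < 1"
  shows "summable (\<lambda>i. q ^ i * a i)"
proof (rule summable_comparison_test')
  show "summable (\<lambda>i. q ^ i * B)"
    using assms(2,3) by (simp add: summable_mult2)
  show "norm (q ^ i * a i) \<le> q ^ i * B" for i
    using assms(1)[of i] assms(2) by (simp add: abs_mult mult_left_mono)
qed

lemma abs_suminf_geometric_weighted_le:
  fixes a :: "nat \<Rightarrow> real"
  assumes a: "\<And>i. \<bar>a i\<bar> \<le> B" and q: "0 \<le> q" "q < 1"
  shows "\<bar>\<Sum>i. q ^ i * a i\<bar> \<le> B / (1 - q)"
proof -
  have term_bound: "\<bar>q ^ i * a i\<bar> \<le> q ^ i * B" for i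
    using a[of i] q by (simp add: abs_mult mult_left_mono)
  have "summable (\<lambda>i. \<bar>q ^ i * a i\<bar>)"
    using summable_geometric_weighted[of "\<lambda>i. \<bar>a i\<bar>" B q] a q by (simp add: abs_mult)
  then have "\<bar>\<Sum>i. q ^ i * a i\<bar> \<le> (\<Sum>i. \<bar>q ^ i * a i\<bar>)"
    using summable_norm[of "\<lambda>i. q ^ i * a i"] by simp
  also have "\<dots> \<le> (\<Sum>i. q ^ i * B)"
    by (rule suminf_le[OF term_bound \<open>summable _\<close>]) (simp add: q summable_mult2)
  also have "\<dots> = B / (1 - q)"
    using q by (simp add: suminf_mult2[symmetric] suminf_geometric)
  finally show ?thesis .
qed

lemma integral_suminf_geometric:
  fixes f :: "nat \<Rightarrow> _ \<Rightarrow> real"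
  assumes M: "M \<in> space (prob_algebra X)" and f: "\<And>i. f i \<in> borel_measurable X"
    and B: "\<And>i x. x \<in> space X \<Longrightarrow> \<bar>f i x\<bar> \<le> B" and q: "0 \<le> q" "q < 1"
  shows "(\<integral>x. (\<Sum>i. q ^ i * f i x) \<partial>M) = (\<Sum>i. q ^ i * (\<integral>x. f i x \<partial>M))"
proof -
  have bound: "\<bar>q ^ i * f i x\<bar> \<le> q ^ i * B" if "x \<in> space X" for i x
    using mult_left_mono[OF B[OF that, of i] zero_le_power[OF q(1)]] q(1) by (simp add: abs_mult)
  have "(\<integral>x. (\<Sum>i. q ^ i * f i x) \<partial>M) = (\<Sum>i. \<integral>x. q ^ i * f i x \<partial>M)"
  proof (rule integral_suminf)
    show "integrable M (\<lambda>x. q ^ i * f i x)" for i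
      by (rule integrable_prob_algebra[OF M bounded_measurable_cmult[OF bounded_measurableI[OF f B]]])
    show "AE x in M. summable (\<lambda>i. norm (q ^ i * f i x))"
    proof (rule AE_I2)
      fix x assume "x \<in> space M"
      then have "\<And>i. \<bar>\<bar>f i x\<bar>\<bar> \<le> B"
        using B by (simp add: space_in_prob_algebra[OF M])
      from summable_geometric_weighted[OF this q] q
      show "summable (\<lambda>i. norm (q ^ i * f i x))"
        by (simp add: abs_mult)
    qed
    show "summable (\<lambda>i. \<integral>x. norm (q ^ i * f i x) \<partial>M)"
    proof (rule summable_comparison_test'[where N=0])
      show "summable (\<lambda>i. q ^ i * B)"
        using q by (simp add: summable_mult2)
      have "\<bar>\<integral>x. \<bar>q ^ i * f i x\<bar> \<partial>M\<bar> \<le> q ^ i * B" for i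
      proof (rule abs_integral_prob_algebra_le[OF M])
        show "(\<lambda>x. \<bar>q ^ i * f i x\<bar>) \<in> borel_measurable X"
          using f by measurable
        show "\<bar>\<bar>q ^ i * f i x\<bar>\<bar> \<le> q ^ i * B" if "x \<in> space X" for x
          using bound[OF that, of i] by simp
      qed
      then show "norm (\<integral>x. norm (q ^ i * f i x) \<partial>M) \<le> q ^ i * B" for i
        by simp
    qed
  qed
  then show ?thesis by simp
qed

lemma at_dist_add_const:
  assumes mu: "mu \<in> space (prob_algebra S)" and f: "f \<in> bounded_measurable S"
    and f': "\<And>s. s \<in> space S \<Longrightarrow> f' s = f s + c"
  shows "at_dist f' mu = at_dist f mu + c"
  unfolding at_dist_def
  using integral_cong_prob_algebra[OF mu f'] integral_add_const_prob_algebra[OF mu f] by simp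

section \<open>The Markov chain of a policy\<close>

definition step_kernel :: "('s \<times> 'a \<Rightarrow> 's measure) \<Rightarrow> ('s \<Rightarrow> 'a measure) \<Rightarrow> 's \<Rightarrow> 's measure" where
  "step_kernel P p s = p s \<bind> (\<lambda>a. P (s, a))"

locale policy_chain =
  fixes S :: "'s measure" and A :: "'a measure"
    and P :: "'s \<times> 'a \<Rightarrow> 's measure" and p :: "'s \<Rightarrow> 'a measure"
  assumes P_kernel: "P \<in> S \<Otimes>\<^sub>M A \<rightarrow>\<^sub>M prob_algebra S"
    and policy: "p \<in> policies S A"
begin

lemma policy_kernel: "p \<in> S \<rightarrow>\<^sub>M prob_algebra A"
  using policy unfolding policies_def .

lemma step_kernel_measurable: "step_kernel P p \<in> S \<rightarrow>\<^sub>M prob_algebra S"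
proof -
  have "(\<lambda>(s, a). P (s, a)) \<in> S \<Otimes>\<^sub>M A \<rightarrow>\<^sub>M prob_algebra S"
    using P_kernel by simp
  from measurable_bind_prob_space2[OF policy_kernel this] show ?thesis
    unfolding step_kernel_def[abs_def] .
qed

lemma state_dist_0 [simp]: "state_dist P p mu 0 = mu"
  by (simp add: state_dist_def)

lemma state_dist_Suc: "state_dist P p mu (Suc t) = state_dist P p mu t \<bind> step_kernel P p"
  by (simp add: state_dist_def step_dist_def step_kernel_def[abs_def])

lemma state_dist_in_prob_algebra:
  assumes "mu \<in> space (prob_algebra S)"
  shows "state_dist P p mu t \<in> space (prob_algebra S)"
proof (induction t)
  case 0
  show ?case using assms by simp
next
  case (Suc t)
  have "(\<lambda>_. state_dist P p mu t \<bind> step_kernel P p) \<in> count_space UNIV \<rightarrow>\<^sub>M prob_algebra S"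
    by (rule measurable_bind_prob_space[OF measurable_const[OF Suc.IH] step_kernel_measurable])
  then show ?case
    unfolding state_dist_Suc by (rule measurable_space) simp
qed

lemma state_dist_return_measurable: "(\<lambda>s. state_dist P p (return S s) t) \<in> S \<rightarrow>\<^sub>M prob_algebra S"
proof (induction t)
  case 0
  show ?case by simp
next
  case (Suc t)
  show ?case
    unfolding state_dist_Suc by (rule measurable_bind_prob_space[OF Suc.IH step_kernel_measurable])
qed

lemma state_dist_eq_bind_return:
  assumes mu: "mu \<in> space (prob_algebra S)"
  shows "state_dist P p mu t = mu \<bind> (\<lambda>s. state_dist P p (return S s) t)"
proof (induction t)
  case 0
  show ?case using mu by (simp add: bind_return'' sets_in_prob_algebra)
next
  case (Suc t)
  have "(\<lambda>s. state_dist P p (return S s) t) \<in> mu \<rightarrow>\<^sub>M subprob_algebra S"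
    using measurable_prob_algebraD[OF state_dist_return_measurable]
    by (simp add: measurable_cong_sets[OF sets_in_prob_algebra[OF mu] refl])
  then show ?case
    unfolding state_dist_Suc Suc.IH
    by (rule bind_assoc[OF _ measurable_prob_algebraD[OF step_kernel_measurable]])
qed

lemma state_dist_return_Suc:
  assumes s: "s \<in> space S"
  shows "state_dist P p (return S s) (Suc t) = step_kernel P p s \<bind> (\<lambda>s'. state_dist P p (return S s') t)"
proof -
  have "state_dist P p (return S s) (Suc t) = state_dist P p (return S s \<bind> step_kernel P p) t"
    unfolding state_dist_def funpow_Suc_right
    by (simp add: step_dist_def step_kernel_def[abs_def])
  also have "return S s \<bind> step_kernel P p = step_kernel P p s"
    using bind_return[OF measurable_prob_algebraD[OF step_kernel_measurable] s] .
  finally show ?thesis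
    using state_dist_eq_bind_return[OF measurable_space[OF step_kernel_measurable s]] by simp
qed

lemma pol_avg_measurable:
  fixes f :: "'s \<times> 'a \<Rightarrow> real"
  assumes f: "f \<in> borel_measurable (S \<Otimes>\<^sub>M A)"
  shows "pol_avg p f \<in> borel_measurable S"
proof -
  have sections: "(\<lambda>s. distr (p s) (S \<Otimes>\<^sub>M A) (\<lambda>a. (s, a))) \<in> S \<rightarrow>\<^sub>M prob_algebra (S \<Otimes>\<^sub>M A)"
    by (rule measurable_distr_prob_space2[OF policy_kernel]) measurable
  have "(\<lambda>s. \<integral>x. f x \<partial>distr (p s) (S \<Otimes>\<^sub>M A) (\<lambda>a. (s, a))) \<in> borel_measurable S"
    by (rule measurable_compose[OF measurable_prob_algebraD[OF sections] integral_measurable_subprob_algebra[OF f]])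
  moreover have "(\<integral>x. f x \<partial>distr (p s) (S \<Otimes>\<^sub>M A) (\<lambda>a. (s, a))) = pol_avg p f s" if s: "s \<in> space S" for s
  proof -
    have "(\<lambda>a. (s, a)) \<in> p s \<rightarrow>\<^sub>M S \<Otimes>\<^sub>M A"
      using measurable_Pair1'[OF s]
      by (simp add: measurable_cong_sets[OF sets_in_prob_algebra[OF measurable_space[OF policy_kernel s]] refl])
    then show ?thesis
      unfolding pol_avg_def using f by (rule integral_distr)
  qed
  ultimately show ?thesis
    using measurable_cong by force
qed

lemma abs_pol_avg_le:
  fixes f :: "'s \<times> 'a \<Rightarrow> real"
  assumes f: "f \<in> borel_measurable (S \<Otimes>\<^sub>M A)"
    and B: "\<And>sa. sa \<in> space (S \<Otimes>\<^sub>M A) \<Longrightarrow> \<bar>f sa\<bar> \<le> B" and s: "s \<in> space S"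
  shows "\<bar>pol_avg p f s\<bar> \<le> B"
  unfolding pol_avg_def
  using s B by (intro abs_integral_prob_algebra_le[OF measurable_space[OF policy_kernel s] measurable_Pair2[OF f s]])
    (simp add: space_pair_measure)

lemma pol_avg_bounded_measurable:
  assumes "f \<in> bounded_measurable (S \<Otimes>\<^sub>M A)"
  shows "pol_avg p f \<in> bounded_measurable S"
proof -
  obtain B where "\<And>sa. sa \<in> space (S \<Otimes>\<^sub>M A) \<Longrightarrow> \<bar>f sa\<bar> \<le> B"
    using assms bounded_measurableE by blast
  with assms show ?thesis
    by (intro bounded_measurableI[where B=B] pol_avg_measurable abs_pol_avg_le) auto
qed

lemma pol_avg_add_const:
  assumes f: "f \<in> bounded_measurable (S \<Otimes>\<^sub>M A)"
    and f': "\<And>sa. sa \<in> space (S \<Otimes>\<^sub>M A) \<Longrightarrow> f' sa = f sa + c" and s: "s \<in> space S"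
  shows "pol_avg p f' s = pol_avg p f s + c"
proof -
  have ps: "p s \<in> space (prob_algebra A)"
    by (rule measurable_space[OF policy_kernel s])
  have "pol_avg p f' s = (\<integral>a. f (s, a) + c \<partial>p s)"
    unfolding pol_avg_def using s f' by (intro integral_cong_prob_algebra[OF ps]) (simp add: space_pair_measure)
  then show ?thesis
    unfolding pol_avg_def by (simp add: integral_add_const_prob_algebra[OF ps bounded_measurable_Pair2[OF f s]])
qed

lemma pol_avg_kernel_integral:
  assumes f: "f \<in> bounded_measurable S" and s: "s \<in> space S"
  shows "pol_avg p (\<lambda>sa. \<integral>y. f y \<partial>P sa) s = (\<integral>y. f y \<partial>step_kernel P p s)"
  unfolding pol_avg_def step_kernel_def
  by (rule integral_bind_prob_algebra[OF measurable_space[OF policy_kernel s] measurable_Pair2[OF P_kernel s] f, symmetric])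

lemma integral_state_dist_Suc:
  assumes f: "f \<in> bounded_measurable S" and mu: "mu \<in> space (prob_algebra S)"
  shows "(\<integral>y. f y \<partial>state_dist P p mu (Suc t)) = (\<integral>s. (\<integral>y. f y \<partial>step_kernel P p s) \<partial>state_dist P p mu t)"
  unfolding state_dist_Suc
  by (rule integral_bind_prob_algebra[OF state_dist_in_prob_algebra[OF mu] step_kernel_measurable f])

definition expected_reward :: "('s \<times> 'a \<Rightarrow> real) \<Rightarrow> nat \<Rightarrow> 's \<Rightarrow> real" where
  "expected_reward f t s = (\<integral>x. pol_avg p f x \<partial>state_dist P p (return S s) t)"

lemma pol_value_eq_suminf: "pol_value S q f P p s = (\<Sum>t. q ^ t * expected_reward f t s)"
  unfolding pol_value_def expected_reward_def ..

lemma expected_reward_measurable: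
  assumes "f \<in> borel_measurable (S \<Otimes>\<^sub>M A)"
  shows "expected_reward f t \<in> borel_measurable S"
  unfolding expected_reward_def
  by (rule measurable_compose[OF measurable_prob_algebraD[OF state_dist_return_measurable]
        integral_measurable_subprob_algebra[OF pol_avg_measurable[OF assms]]])

lemma abs_expected_reward_le:
  assumes f: "f \<in> borel_measurable (S \<Otimes>\<^sub>M A)"
    and B: "\<And>sa. sa \<in> space (S \<Otimes>\<^sub>M A) \<Longrightarrow> \<bar>f sa\<bar> \<le> B" and s: "s \<in> space S"
  shows "\<bar>expected_reward f t s\<bar> \<le> B"
  unfolding expected_reward_def
  by (rule abs_integral_prob_algebra_le[OF measurable_space[OF state_dist_return_measurable s]
        pol_avg_measurable[OF f] abs_pol_avg_le[OF f B]])

lemma expected_reward_0: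
  assumes "f \<in> borel_measurable (S \<Otimes>\<^sub>M A)" and "s \<in> space S"
  shows "expected_reward f 0 s = pol_avg p f s"
  unfolding expected_reward_def
  using assms by (simp add: integral_return pol_avg_measurable)

lemma expected_reward_Suc:
  assumes f: "f \<in> bounded_measurable (S \<Otimes>\<^sub>M A)" and s: "s \<in> space S"
  shows "expected_reward f (Suc t) s = (\<integral>y. expected_reward f t y \<partial>step_kernel P p s)"
  unfolding expected_reward_def state_dist_return_Suc[OF s]
  by (rule integral_bind_prob_algebra[OF measurable_space[OF step_kernel_measurable s]
        state_dist_return_measurable pol_avg_bounded_measurable[OF f]])

lemma pol_value_bounded_measurable:
  assumes f: "f \<in> bounded_measurable (S \<Otimes>\<^sub>M A)" and q: "0 \<le> q" "q < 1"
  shows "pol_value S q f P p \<in> bounded_measurable S"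
proof -
  obtain B where B: "\<And>sa. sa \<in> space (S \<Otimes>\<^sub>M A) \<Longrightarrow> \<bar>f sa\<bar> \<le> B"
    using f bounded_measurableE by blast
  note expected_reward_measurable[OF bounded_measurable_imp_measurable[OF f], measurable]
  have "(\<lambda>s. \<Sum>t. q ^ t * expected_reward f t s) \<in> borel_measurable S"
    by measurable
  moreover have "\<bar>\<Sum>t. q ^ t * expected_reward f t s\<bar> \<le> B / (1 - q)" if "s \<in> space S" for s
    by (rule abs_suminf_geometric_weighted_le[OF abs_expected_reward_le[OF _ B that] q])
      (rule bounded_measurable_imp_measurable[OF f])
  ultimately show ?thesis
    unfolding pol_value_eq_suminf[abs_def] by (rule bounded_measurableI)
qed

lemma pol_value_bellman:
  assumes f: "f \<in> bounded_measurable (S \<Otimes>\<^sub>M A)" and q: "0 \<le> q" "q < 1" and s: "s \<in> space S"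
  shows "pol_value S q f P p s = pol_avg p f s + q * (\<integral>y. pol_value S q f P p y \<partial>step_kernel P p s)"
proof -
  obtain B where B: "\<And>sa. sa \<in> space (S \<Otimes>\<^sub>M A) \<Longrightarrow> \<bar>f sa\<bar> \<le> B"
    using f bounded_measurableE by blast
  note f_meas = bounded_measurable_imp_measurable[OF f]
  have summable_from: "summable (\<lambda>t. q ^ t * expected_reward f (t + k) s)" for k
    by (rule summable_geometric_weighted[OF abs_expected_reward_le[OF f_meas B s] q])
  have "pol_value S q f P p s = expected_reward f 0 s + (\<Sum>t. q ^ Suc t * expected_reward f (Suc t) s)"
    unfolding pol_value_eq_suminf using suminf_split_head[OF summable_from[of 0]] by simp
  also have "(\<Sum>t. q ^ Suc t * expected_reward f (Suc t) s)
      = q * (\<Sum>t. q ^ t * (\<integral>y. expected_reward f t y \<partial>step_kernel P p s))"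
    using suminf_mult[OF summable_from[of 1], of q]
    by (simp add: expected_reward_Suc[OF f s, symmetric] mult.assoc)
  also have "(\<Sum>t. q ^ t * (\<integral>y. expected_reward f t y \<partial>step_kernel P p s))
      = (\<integral>y. pol_value S q f P p y \<partial>step_kernel P p s)"
    unfolding pol_value_eq_suminf
    by (rule integral_suminf_geometric[OF measurable_space[OF step_kernel_measurable s]
          expected_reward_measurable[OF f_meas] abs_expected_reward_le[OF f_meas B] q, symmetric])
  finally show ?thesis
    by (simp add: expected_reward_0[OF f_meas s])
qed

lemma pol_value_add_const:
  assumes f: "f \<in> bounded_measurable (S \<Otimes>\<^sub>M A)"
    and f': "\<And>sa. sa \<in> space (S \<Otimes>\<^sub>M A) \<Longrightarrow> f' sa = f sa + c"
    and q: "0 \<le> q" "q < 1" and s: "s \<in> space S"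
  shows "pol_value S q f' P p s = pol_value S q f P p s + c / (1 - q)"
proof -
  obtain B where B: "\<And>sa. sa \<in> space (S \<Otimes>\<^sub>M A) \<Longrightarrow> \<bar>f sa\<bar> \<le> B"
    using f bounded_measurableE by blast
  have "expected_reward f' t s = expected_reward f t s + c" for t
  proof -
    have dist: "state_dist P p (return S s) t \<in> space (prob_algebra S)"
      by (rule measurable_space[OF state_dist_return_measurable s])
    have "expected_reward f' t s = (\<integral>x. pol_avg p f x + c \<partial>state_dist P p (return S s) t)"
      unfolding expected_reward_def
      by (rule integral_cong_prob_algebra[OF dist pol_avg_add_const[OF f f']])
    then show ?thesis
      unfolding expected_reward_def
      by (simp add: integral_add_const_prob_algebra[OF dist pol_avg_bounded_measurable[OF f]])
  qed
  then have "pol_value S q f' P p s = (\<Sum>t. q ^ t * expected_reward f t s + q ^ t * c)"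
    unfolding pol_value_eq_suminf by (simp add: distrib_left)
  also have "\<dots> = pol_value S q f P p s + (\<Sum>t. q ^ t * c)"
    unfolding pol_value_eq_suminf
    by (rule suminf_add[symmetric, OF summable_geometric_weighted[OF abs_expected_reward_le[OF _ B s] q]])
      (use f q in \<open>auto simp: summable_mult2\<close>)
  also have "(\<Sum>t. q ^ t * c) = c / (1 - q)"
    using q by (simp add: suminf_mult2[symmetric] suminf_geometric)
  finally show ?thesis .
qed

lemma summable_occupancy:
  assumes f: "f \<in> bounded_measurable S" and mu: "mu \<in> space (prob_algebra S)"
    and g: "0 \<le> g" "g < 1"
  shows "summable (\<lambda>t. g ^ t * (\<integral>s. f s \<partial>state_dist P p mu t))"
proof -
  obtain B where "\<And>s. s \<in> space S \<Longrightarrow> \<bar>f s\<bar> \<le> B"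
    using f bounded_measurableE by blast
  then show ?thesis
    by (intro summable_geometric_weighted[OF _ g] abs_integral_prob_algebra_le[OF state_dist_in_prob_algebra[OF mu]]
        bounded_measurable_imp_measurable[OF f])
qed

lemma occ_expect_cong:
  assumes "\<And>s. s \<in> space S \<Longrightarrow> f s = f' s" and mu: "mu \<in> space (prob_algebra S)"
  shows "occ_expect g P p mu f = occ_expect g P p mu f'"
  unfolding occ_expect_def
  using integral_cong_prob_algebra[OF state_dist_in_prob_algebra[OF mu] assms(1)] by simp

lemma occ_expect_add:
  assumes f: "f \<in> bounded_measurable S" and f': "f' \<in> bounded_measurable S"
    and mu: "mu \<in> space (prob_algebra S)" and g: "0 \<le> g" "g < 1"
  shows "occ_expect g P p mu (\<lambda>s. f s + f' s) = occ_expect g P p mu f + occ_expect g P p mu f'"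
proof -
  have "(\<integral>s. f s + f' s \<partial>state_dist P p mu t)
      = (\<integral>s. f s \<partial>state_dist P p mu t) + (\<integral>s. f' s \<partial>state_dist P p mu t)" for t
    using integrable_prob_algebra[OF state_dist_in_prob_algebra[OF mu]] f f' by simp
  then have "occ_expect g P p mu (\<lambda>s. f s + f' s) = (1 - g) *
      (\<Sum>t. g ^ t * (\<integral>s. f s \<partial>state_dist P p mu t) + g ^ t * (\<integral>s. f' s \<partial>state_dist P p mu t))"
    unfolding occ_expect_def by (simp add: distrib_left)
  also have "\<dots> = (1 - g) *
      ((\<Sum>t. g ^ t * (\<integral>s. f s \<partial>state_dist P p mu t)) + (\<Sum>t. g ^ t * (\<integral>s. f' s \<partial>state_dist P p mu t)))"
    using suminf_add[OF summable_occupancy[OF f mu g] summable_occupancy[OF f' mu g]] by simp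
  finally show ?thesis
    unfolding occ_expect_def by (simp add: distrib_left)
qed

lemma occ_expect_cmult:
  assumes f: "f \<in> bounded_measurable S" and mu: "mu \<in> space (prob_algebra S)"
    and g: "0 \<le> g" "g < 1"
  shows "occ_expect g P p mu (\<lambda>s. c * f s) = c * occ_expect g P p mu f"
  unfolding occ_expect_def
  using suminf_mult[OF summable_occupancy[OF f mu g], of c] by (simp add: ac_simps)

lemma occ_expect_diff:
  assumes f: "f \<in> bounded_measurable S" and f': "f' \<in> bounded_measurable S"
    and mu: "mu \<in> space (prob_algebra S)" and g: "0 \<le> g" "g < 1"
  shows "occ_expect g P p mu (\<lambda>s. f s - f' s) = occ_expect g P p mu f - occ_expect g P p mu f'"
  using occ_expect_add[OF f bounded_measurable_cmult[OF f'] mu g, of "-1"]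
    occ_expect_cmult[OF f' mu g, of "-1"] by simp

lemma occ_expect_add_const:
  assumes f: "f \<in> bounded_measurable S" and f': "\<And>s. s \<in> space S \<Longrightarrow> f' s = f s + c"
    and mu: "mu \<in> space (prob_algebra S)" and g: "0 \<le> g" "g < 1"
  shows "occ_expect g P p mu f' = occ_expect g P p mu f + c"
proof -
  have "occ_expect g P p mu (\<lambda>_. c) = (1 - g) * (\<Sum>t. g ^ t * c)"
    unfolding occ_expect_def
    using prob_space.prob_space[OF prob_space_in_prob_algebra[OF state_dist_in_prob_algebra[OF mu]]]
    by simp
  also have "\<dots> = c"
    using g by (simp add: suminf_mult2[symmetric] suminf_geometric)
  finally show ?thesis
    using occ_expect_cong[OF f' mu] occ_expect_add[OF f bounded_measurable_const mu g] by simp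
qed

lemma occ_expect_telescope:
  assumes f: "f \<in> bounded_measurable S" and mu: "mu \<in> space (prob_algebra S)"
    and g: "0 \<le> g" "g < 1"
  shows "occ_expect g P p mu f
    = (1 - g) * at_dist f mu + g * occ_expect g P p mu (\<lambda>s. \<integral>y. f y \<partial>step_kernel P p s)"
proof -
  let ?a = "\<lambda>t. \<integral>s. f s \<partial>state_dist P p mu t"
  obtain B where "\<And>s. s \<in> space S \<Longrightarrow> \<bar>f s\<bar> \<le> B"
    using f bounded_measurableE by blast
  then have "summable (\<lambda>t. g ^ t * ?a (Suc t))"
    by (intro summable_geometric_weighted[OF _ g] abs_integral_prob_algebra_le[OF state_dist_in_prob_algebra[OF mu]]
        bounded_measurable_imp_measurable[OF f])
  have "(\<Sum>t. g ^ t * ?a t) = ?a 0 + (\<Sum>t. g ^ Suc t * ?a (Suc t))"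
    using suminf_split_head[OF summable_occupancy[OF f mu g]] by simp
  also have "(\<Sum>t. g ^ Suc t * ?a (Suc t)) = g * (\<Sum>t. g ^ t * ?a (Suc t))"
    using suminf_mult[OF \<open>summable _\<close>, of g] by (simp add: ac_simps)
  finally show ?thesis
    unfolding occ_expect_def at_dist_def integral_state_dist_Suc[OF f mu]
    by (simp add: algebra_simps)
qed

lemma occ_expect_pol_avg_integral_diff:
  assumes f: "f \<in> bounded_measurable S" and f': "f' \<in> bounded_measurable S"
    and mu: "mu \<in> space (prob_algebra S)" and g: "0 \<le> g" "g < 1"
  shows "occ_expect g P p mu (pol_avg p (\<lambda>sa. \<integral>y. f y - f' y \<partial>P sa))
    = occ_expect g P p mu (\<lambda>s. \<integral>y. f y \<partial>step_kernel P p s)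
      - occ_expect g P p mu (\<lambda>s. \<integral>y. f' y \<partial>step_kernel P p s)"
proof -
  have "pol_avg p (\<lambda>sa. \<integral>y. f y - f' y \<partial>P sa) s
      = (\<integral>y. f y \<partial>step_kernel P p s) - (\<integral>y. f' y \<partial>step_kernel P p s)" if s: "s \<in> space S" for s
  proof -
    have K: "step_kernel P p s \<in> space (prob_algebra S)"
      by (rule measurable_space[OF step_kernel_measurable s])
    show ?thesis
      unfolding pol_avg_kernel_integral[OF bounded_measurable_diff[OF f f'] s]
      using integrable_prob_algebra[OF K f] integrable_prob_algebra[OF K f'] by simp
  qed
  then have "occ_expect g P p mu (pol_avg p (\<lambda>sa. \<integral>y. f y - f' y \<partial>P sa))
      = occ_expect g P p mu (\<lambda>s. (\<integral>y. f y \<partial>step_kernel P p s) - (\<integral>y. f' y \<partial>step_kernel P p s))"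
    by (rule occ_expect_cong[OF _ mu])
  also have "\<dots> = occ_expect g P p mu (\<lambda>s. \<integral>y. f y \<partial>step_kernel P p s)
      - occ_expect g P p mu (\<lambda>s. \<integral>y. f' y \<partial>step_kernel P p s)"
    by (rule occ_expect_diff[OF integral_kernel_bounded_measurable[OF step_kernel_measurable f]
          integral_kernel_bounded_measurable[OF step_kernel_measurable f'] mu g])
  finally show ?thesis .
qed

lemma occ_expect_pol_avg:
  assumes f: "f \<in> bounded_measurable (S \<Otimes>\<^sub>M A)" and mu: "mu \<in> space (prob_algebra S)"
    and g: "0 \<le> g" "g < 1"
  shows "occ_expect g P p mu (pol_avg p f) = (1 - g) * at_dist (pol_value S g f P p) mu"
proof -
  obtain B where B: "\<And>sa. sa \<in> space (S \<Otimes>\<^sub>M A) \<Longrightarrow> \<bar>f sa\<bar> \<le> B"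
    using f bounded_measurableE by blast
  note f_meas = bounded_measurable_imp_measurable[OF f]
  have "(\<integral>s. expected_reward f t s \<partial>mu) = (\<integral>x. pol_avg p f x \<partial>state_dist P p mu t)" for t
    unfolding expected_reward_def state_dist_eq_bind_return[OF mu, of t]
    by (rule integral_bind_prob_algebra[OF mu state_dist_return_measurable pol_avg_bounded_measurable[OF f], symmetric])
  moreover have "at_dist (pol_value S g f P p) mu = (\<Sum>t. g ^ t * (\<integral>s. expected_reward f t s \<partial>mu))"
    unfolding at_dist_def pol_value_eq_suminf
    by (rule integral_suminf_geometric[OF mu expected_reward_measurable[OF f_meas] abs_expected_reward_le[OF f_meas B] g])
  ultimately show ?thesis
    unfolding occ_expect_def by simp
qed

end

section \<open>Optimal values\<close>

definition has_optimal_policy :: "'s measure \<Rightarrow> 'a measure \<Rightarrow> real \<Rightarrow> ('s \<times> 'a \<Rightarrow> real)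
    \<Rightarrow> ('s \<times> 'a \<Rightarrow> 's measure) \<Rightarrow> bool" where
  "has_optimal_policy S A q f P \<longleftrightarrow> (\<exists>ps \<in> policies S A. \<forall>p' \<in> policies S A. \<forall>s \<in> space S.
     pol_value S q f P p' s \<le> pol_value S q f P ps s)"

lemma opt_value_eq_pol_value:
  assumes "ps \<in> policies S A"
    and "\<forall>p' \<in> policies S A. \<forall>s \<in> space S. pol_value S q f P p' s \<le> pol_value S q f P ps s"
    and "s \<in> space S"
  shows "opt_value S A q f P s = pol_value S q f P ps s"
  unfolding opt_value_def using assms by (intro cSup_eq_maximum) auto

lemma opt_value_bounded_measurable:
  assumes P: "P \<in> S \<Otimes>\<^sub>M A \<rightarrow>\<^sub>M prob_algebra S" and f: "f \<in> bounded_measurable (S \<Otimes>\<^sub>M A)"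
    and q: "0 \<le> q" "q < 1"
    and opt: "has_optimal_policy S A q f P"
  shows "opt_value S A q f P \<in> bounded_measurable S"
proof -
  obtain ps where ps: "ps \<in> policies S A" and max: "\<forall>p' \<in> policies S A. \<forall>s \<in> space S.
      pol_value S q f P p' s \<le> pol_value S q f P ps s"
    using opt unfolding has_optimal_policy_def by blast
  interpret policy_chain S A P ps
    using P ps by unfold_locales
  show ?thesis
    by (rule bounded_measurable_cong[OF pol_value_bounded_measurable[OF f q]])
      (simp add: opt_value_eq_pol_value[OF ps max])
qed

lemma opt_value_add_const:
  assumes P: "P \<in> S \<Otimes>\<^sub>M A \<rightarrow>\<^sub>M prob_algebra S" and f: "f \<in> bounded_measurable (S \<Otimes>\<^sub>M A)"
    and f': "\<And>sa. sa \<in> space (S \<Otimes>\<^sub>M A) \<Longrightarrow> f' sa = f sa + c"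
    and q: "0 \<le> q" "q < 1"
    and opt: "has_optimal_policy S A q f P"
    and s: "s \<in> space S"
  shows "opt_value S A q f' P s = opt_value S A q f P s + c / (1 - q)"
proof -
  obtain ps where ps: "ps \<in> policies S A" and max: "\<forall>p' \<in> policies S A. \<forall>s \<in> space S.
      pol_value S q f P p' s \<le> pol_value S q f P ps s"
    using opt unfolding has_optimal_policy_def by blast
  have shift: "pol_value S q f' P p' s = pol_value S q f P p' s + c / (1 - q)"
    if "p' \<in> policies S A" "s \<in> space S" for p' s
  proof -
    interpret policy_chain S A P p'
      using P that(1) by unfold_locales
    show ?thesis by (rule pol_value_add_const[OF f f' q that(2)])
  qed
  then have "\<forall>p' \<in> policies S A. \<forall>s \<in> space S. pol_value S q f' P p' s \<le> pol_value S q f' P ps s"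
    using max ps by simp
  then show ?thesis
    using opt_value_eq_pol_value[OF ps _ s] max shift[OF ps s] by simp
qed

section \<open>The reshaped MDP\<close>

locale heuristic_reshaping =
  fixes S :: "'s measure" and A :: "'a measure"
    and P :: "'s \<times> 'a \<Rightarrow> 's measure" and r :: "'s \<times> 'a \<Rightarrow> real"
    and g lam :: real and h :: "'s \<Rightarrow> real" and d0 :: "'s measure"
  assumes P_kernel: "P \<in> S \<Otimes>\<^sub>M A \<rightarrow>\<^sub>M prob_algebra S"
    and reward: "r \<in> bounded_measurable (S \<Otimes>\<^sub>M A)"
    and discount: "0 \<le> g" "g < 1"
    and mixing: "0 \<le> lam" "lam \<le> 1"
    and heuristic: "h \<in> bounded_measurable S"
    and initial: "d0 \<in> space (prob_algebra S)"
begin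

lemma policy_chainI: "p \<in> policies S A \<Longrightarrow> policy_chain S A P p"
  using P_kernel by unfold_locales

lemma reshaped_discount: "0 \<le> lam * g" "lam * g < 1"
  using discount mixing by (auto intro: order_le_less_trans[OF mult_left_le_one_le])

lemma reshaped_reward_bounded_measurable:
  "reshaped_reward g lam r P h \<in> bounded_measurable (S \<Otimes>\<^sub>M A)"
  unfolding reshaped_reward_def[abs_def]
  by (intro bounded_measurable_add reward bounded_measurable_cmult
      integral_kernel_bounded_measurable[OF P_kernel heuristic])

lemma pol_avg_reshaped_reward:
  assumes p: "p \<in> policies S A" and s: "s \<in> space S"
  shows "pol_avg p (reshaped_reward g lam r P h) s
    = pol_avg p r s + (1 - lam) * g * (\<integral>y. h y \<partial>step_kernel P p s)"
proof -
  interpret policy_chain S A P p by (rule policy_chainI[OF p])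
  have ps: "p s \<in> space (prob_algebra A)"
    by (rule measurable_space[OF policy_kernel s])
  have "(\<lambda>a. r (s, a)) \<in> bounded_measurable A"
    by (rule bounded_measurable_Pair2[OF reward s])
  moreover have "(\<lambda>a. \<integral>y. h y \<partial>P (s, a)) \<in> bounded_measurable A"
    by (rule bounded_measurable_Pair2[OF integral_kernel_bounded_measurable[OF P_kernel heuristic] s])
  ultimately have "pol_avg p (reshaped_reward g lam r P h) s
      = pol_avg p r s + (1 - lam) * g * pol_avg p (\<lambda>sa. \<integral>y. h y \<partial>P sa) s"
    unfolding pol_avg_def reshaped_reward_def
    using integrable_prob_algebra[OF ps] by simp
  then show ?thesis
    using pol_avg_kernel_integral[OF heuristic s] by simp
qed

lemma occ_expect_reshaped_value:
  assumes p: "p \<in> policies S A"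
  shows "(1 - lam) * occ_expect g P p d0 (pol_value S (lam * g) (reshaped_reward g lam r P h) P p)
    = (1 - g) * at_dist (pol_value S g r P p) d0
      + (1 - lam) * g * occ_expect g P p d0 (\<lambda>s. \<integral>y. h y \<partial>step_kernel P p s)
      - lam * (1 - g) * at_dist (pol_value S (lam * g) (reshaped_reward g lam r P h) P p) d0"
proof -
  interpret policy_chain S A P p by (rule policy_chainI[OF p])
  define V where "V = pol_value S (lam * g) (reshaped_reward g lam r P h) P p"
  define Kh where "Kh = (\<lambda>s. \<integral>y. h y \<partial>step_kernel P p s)"
  define KV where "KV = (\<lambda>s. \<integral>y. V y \<partial>step_kernel P p s)"
  have V: "V \<in> bounded_measurable S"
    unfolding V_def by (rule pol_value_bounded_measurable[OF reshaped_reward_bounded_measurable reshaped_discount])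
  have Kh: "Kh \<in> bounded_measurable S"
    unfolding Kh_def by (rule integral_kernel_bounded_measurable[OF step_kernel_measurable heuristic])
  have KV: "KV \<in> bounded_measurable S"
    unfolding KV_def by (rule integral_kernel_bounded_measurable[OF step_kernel_measurable V])
  have r_avg: "pol_avg p r \<in> bounded_measurable S"
    by (rule pol_avg_bounded_measurable[OF reward])
  have bellman: "V s = (pol_avg p r s + (1 - lam) * g * Kh s) + lam * g * KV s" if "s \<in> space S" for s
    using pol_value_bellman[OF reshaped_reward_bounded_measurable reshaped_discount that]
      pol_avg_reshaped_reward[OF p that]
    unfolding V_def Kh_def KV_def by simp
  have "occ_expect g P p d0 V
      = occ_expect g P p d0 (\<lambda>s. (pol_avg p r s + (1 - lam) * g * Kh s) + lam * g * KV s)"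
    by (rule occ_expect_cong[OF bellman initial])
  also have "\<dots> = occ_expect g P p d0 (pol_avg p r) + (1 - lam) * g * occ_expect g P p d0 Kh
      + lam * g * occ_expect g P p d0 KV"
    using bounded_measurable_add[OF r_avg bounded_measurable_cmult[OF Kh]] bounded_measurable_cmult[OF KV]
      bounded_measurable_cmult[OF Kh]
    by (simp add: occ_expect_add occ_expect_cmult r_avg Kh KV initial discount)
  finally have occ_bellman: "occ_expect g P p d0 V = (1 - g) * at_dist (pol_value S g r P p) d0
      + (1 - lam) * g * occ_expect g P p d0 Kh + lam * g * occ_expect g P p d0 KV"
    by (simp add: occ_expect_pol_avg[OF reward initial discount])
  have "occ_expect g P p d0 V = (1 - g) * at_dist V d0 + g * occ_expect g P p d0 KV"
    unfolding KV_def by (rule occ_expect_telescope[OF V initial discount])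
  with occ_bellman show ?thesis
    unfolding V_def[symmetric] Kh_def[symmetric] by algebra
qed

lemma regret_plus_bias:
  assumes p: "p \<in> policies S A"
    and opt: "opt_value S A (lam * g) (reshaped_reward g lam r P h) P \<in> bounded_measurable S"
  shows "at_dist (opt_value S A g r P) d0 - at_dist (pol_value S g r P p) d0
    = Regret S A g r P d0 h lam p + Bias S A g r P d0 h lam p"
proof -
  interpret policy_chain S A P p by (rule policy_chainI[OF p])
  define W where "W = opt_value S A (lam * g) (reshaped_reward g lam r P h) P"
  define Kh where "Kh = (\<lambda>s. \<integral>y. h y \<partial>step_kernel P p s)"
  define KW where "KW = (\<lambda>s. \<integral>y. W y \<partial>step_kernel P p s)"
  have W: "W \<in> bounded_measurable S"
    unfolding W_def by (rule opt)
  have occ_W: "occ_expect g P p d0 W = (1 - g) * at_dist W d0 + g * occ_expect g P p d0 KW"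
    unfolding KW_def by (rule occ_expect_telescope[OF W initial discount])
  have occ_gap: "occ_expect g P p d0 (pol_avg p (\<lambda>sa. \<integral>y. h y - W y \<partial>P sa))
      = occ_expect g P p d0 Kh - occ_expect g P p d0 KW"
    unfolding Kh_def KW_def by (rule occ_expect_pol_avg_integral_diff[OF heuristic W initial discount])
  have one_minus_g: "1 - g \<noteq> 0"
    using discount by simp
  have regret: "(1 - g) * Regret S A g r P d0 h lam p
      = (1 - g) * lam * (at_dist W d0 - at_dist (pol_value S (lam * g) (reshaped_reward g lam r P h) P p) d0)
        + (1 - lam) * (occ_expect g P p d0 W
          - occ_expect g P p d0 (pol_value S (lam * g) (reshaped_reward g lam r P h) P p))"
    unfolding Regret_def Let_def W_def[symmetric] using one_minus_g by (simp add: field_simps)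
  have bias: "(1 - g) * Bias S A g r P d0 h lam p
      = (1 - g) * (at_dist (opt_value S A g r P) d0 - at_dist W d0)
        + g * (1 - lam) * (occ_expect g P p d0 Kh - occ_expect g P p d0 KW)"
    unfolding Bias_def Let_def W_def[symmetric] occ_gap using one_minus_g by (simp add: field_simps)
  have "(1 - g) * (at_dist (opt_value S A g r P) d0 - at_dist (pol_value S g r P p) d0)
      = (1 - g) * (Regret S A g r P d0 h lam p + Bias S A g r P d0 h lam p)"
    using regret bias occ_expect_reshaped_value[OF p] occ_W unfolding Kh_def[symmetric] by algebra
  with one_minus_g show ?thesis
    by simp
qed

lemma reshaped_reward_add_const:
  assumes "sa \<in> space (S \<Otimes>\<^sub>M A)"
  shows "reshaped_reward g lam r P (\<lambda>s. h s + b) sa = reshaped_reward g lam r P h sa + (1 - lam) * g * b"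
  unfolding reshaped_reward_def
  using integral_add_const_prob_algebra[OF measurable_space[OF P_kernel assms] heuristic]
  by (simp add: algebra_simps)

lemma pol_value_reshaped_add_const:
  assumes p: "p \<in> policies S A" and s: "s \<in> space S"
  shows "pol_value S (lam * g) (reshaped_reward g lam r P (\<lambda>s. h s + b)) P p s
    = pol_value S (lam * g) (reshaped_reward g lam r P h) P p s + (1 - lam) * g * b / (1 - lam * g)"
proof -
  interpret policy_chain S A P p by (rule policy_chainI[OF p])
  show ?thesis
    by (rule pol_value_add_const[OF reshaped_reward_bounded_measurable reshaped_reward_add_const
          reshaped_discount s])
qed

lemma opt_value_reshaped_bounded_measurable:
  assumes "has_optimal_policy S A (lam * g) (reshaped_reward g lam r P h) P"
  shows "opt_value S A (lam * g) (reshaped_reward g lam r P h) P \<in> bounded_measurable S"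
  by (rule opt_value_bounded_measurable[OF P_kernel reshaped_reward_bounded_measurable reshaped_discount assms])

lemma opt_value_reshaped_add_const:
  assumes "has_optimal_policy S A (lam * g) (reshaped_reward g lam r P h) P"
    and "s \<in> space S"
  shows "opt_value S A (lam * g) (reshaped_reward g lam r P (\<lambda>s. h s + b)) P s
    = opt_value S A (lam * g) (reshaped_reward g lam r P h) P s + (1 - lam) * g * b / (1 - lam * g)"
  by (rule opt_value_add_const[OF P_kernel reshaped_reward_bounded_measurable reshaped_reward_add_const
        reshaped_discount assms])

lemma Regret_add_const:
  assumes p: "p \<in> policies S A"
    and opt: "has_optimal_policy S A (lam * g) (reshaped_reward g lam r P h) P"
  shows "Regret S A g r P d0 (\<lambda>s. h s + b) lam p = Regret S A g r P d0 h lam p"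
proof -
  interpret policy_chain S A P p by (rule policy_chainI[OF p])
  note W = opt_value_reshaped_bounded_measurable[OF opt]
    and W' = opt_value_reshaped_add_const[OF opt]
    and V = pol_value_bounded_measurable[OF reshaped_reward_bounded_measurable reshaped_discount]
    and V' = pol_value_reshaped_add_const[OF p]
  show ?thesis
    unfolding Regret_def Let_def
    by (simp add: at_dist_add_const[OF initial W W'] at_dist_add_const[OF initial V V']
        occ_expect_add_const[OF W W' initial discount] occ_expect_add_const[OF V V' initial discount])
qed

lemma Bias_add_const:
  assumes p: "p \<in> policies S A"
    and opt: "has_optimal_policy S A (lam * g) (reshaped_reward g lam r P h) P"
  shows "Bias S A g r P d0 (\<lambda>s. h s + b) lam p = Bias S A g r P d0 h lam p"
proof -
  interpret policy_chain S A P p by (rule policy_chainI[OF p])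
  let ?rt' = "reshaped_reward g lam r P (\<lambda>s. h s + b)"
  define c where "c = (1 - lam) * g * b / (1 - lam * g)"
  define W where "W = opt_value S A (lam * g) (reshaped_reward g lam r P h) P"
  have W: "W \<in> bounded_measurable S"
    unfolding W_def by (rule opt_value_reshaped_bounded_measurable[OF opt])
  have W': "opt_value S A (lam * g) ?rt' P s = W s + c" if "s \<in> space S" for s
    unfolding W_def c_def by (rule opt_value_reshaped_add_const[OF opt that])
  have gap: "(\<lambda>sa. \<integral>y. h y - W y \<partial>P sa) \<in> bounded_measurable (S \<Otimes>\<^sub>M A)"
    by (rule integral_kernel_bounded_measurable[OF P_kernel bounded_measurable_diff[OF heuristic W]])
  have gap': "(\<integral>y. h y + b - opt_value S A (lam * g) ?rt' P y \<partial>P sa) = (\<integral>y. h y - W y \<partial>P sa) + (b - c)"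
    if "sa \<in> space (S \<Otimes>\<^sub>M A)" for sa
  proof -
    have Psa: "P sa \<in> space (prob_algebra S)"
      by (rule measurable_space[OF P_kernel that])
    have "(\<integral>y. h y + b - opt_value S A (lam * g) ?rt' P y \<partial>P sa) = (\<integral>y. h y - W y + (b - c) \<partial>P sa)"
      by (rule integral_cong_prob_algebra[OF Psa]) (simp add: W')
    then show ?thesis
      by (simp add: integral_add_const_prob_algebra[OF Psa bounded_measurable_diff[OF heuristic W]])
  qed
  have occ_gap: "occ_expect g P p d0 (pol_avg p (\<lambda>sa. \<integral>y. h y + b - opt_value S A (lam * g) ?rt' P y \<partial>P sa))
      = occ_expect g P p d0 (pol_avg p (\<lambda>sa. \<integral>y. h y - W y \<partial>P sa)) + (b - c)"
    by (rule occ_expect_add_const[OF pol_avg_bounded_measurable[OF gap] pol_avg_add_const[OF gap gap']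
          initial discount])
  have "1 - g \<noteq> 0" "1 - lam * g \<noteq> 0"
    using discount reshaped_discount by auto
  then have "b - c = b * (1 - g) / (1 - lam * g)"
    unfolding c_def by (simp add: field_simps)
  with \<open>1 - g \<noteq> 0\<close> have "g * (1 - lam) / (1 - g) * (b - c) = c"
    unfolding c_def by simp
  then show ?thesis
    unfolding Bias_def Let_def occ_gap W_def[symmetric]
    by (simp add: at_dist_add_const[OF initial W W'] distrib_left)
qed

end

theorem theorem1:
  fixes S :: "'s measure" and A :: "'a measure"
    and P :: "'s \<times> 'a \<Rightarrow> 's measure" and r :: "'s \<times> 'a \<Rightarrow> real"
    and g lam b :: real and d0 :: "'s measure"
    and h :: "'s \<Rightarrow> real" and p :: "'s \<Rightarrow> 'a measure"
  assumes g: "0 \<le> g" "g < 1"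
    and r_meas: "r \<in> borel_measurable (S \<Otimes>\<^sub>M A)"
    and r_range: "\<And>s a. s \<in> space S \<Longrightarrow> a \<in> space A \<Longrightarrow> 0 \<le> r (s, a) \<and> r (s, a) \<le> 1"
    and P_kernel: "P \<in> S \<Otimes>\<^sub>M A \<rightarrow>\<^sub>M prob_algebra S"
    and d0: "d0 \<in> space (prob_algebra S)"
    and opt_exists: "\<exists>ps \<in> policies S A. \<forall>p' \<in> policies S A. \<forall>s \<in> space S.
                        pol_value S g r P p' s \<le> pol_value S g r P ps s"
    and p: "p \<in> policies S A"
    and h_meas: "h \<in> borel_measurable S"
    and h_bdd: "\<exists>B. \<forall>s \<in> space S. \<bar>h s\<bar> \<le> B"
    and lam: "0 \<le> lam" "lam \<le> 1"
    and opt_exists_reshaped: "\<exists>ps \<in> policies S A. \<forall>p' \<in> policies S A. \<forall>s \<in> space S.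
                        pol_value S (lam * g) (reshaped_reward g lam r P h) P p' s
                          \<le> pol_value S (lam * g) (reshaped_reward g lam r P h) P ps s"
  shows "(at_dist (opt_value S A g r P) d0 - at_dist (pol_value S g r P p) d0
           = Regret S A g r P d0 h lam p + Bias S A g r P d0 h lam p)
         \<and> Bias S A g r P d0 (\<lambda>s. h s + b) lam p = Bias S A g r P d0 h lam p
         \<and> Regret S A g r P d0 (\<lambda>s. h s + b) lam p = Regret S A g r P d0 h lam p"
proof -
  have "r \<in> bounded_measurable (S \<Otimes>\<^sub>M A)"
    using r_meas r_range by (intro bounded_measurableI[where B=1]) (auto simp: space_pair_measure)
  moreover have "h \<in> bounded_measurable S"
    using h_meas h_bdd unfolding bounded_measurable_def by blast
  ultimately interpret heuristic_reshaping S A P r g lam h d0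
    using P_kernel g lam d0 by unfold_locales
  note opt = opt_exists_reshaped[folded has_optimal_policy_def]
  show ?thesis
    using regret_plus_bias[OF p opt_value_reshaped_bounded_measurable[OF opt]]
      Bias_add_const[OF p opt] Regret_add_const[OF p opt]
    by simp
qed

end
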